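(* Let $B\in\mathbb{R}^{N_x\times N_x}$ be symmetric positive definite, $\bar x\in\mathbb{R}^{N_x}$, and $V(x) = \frac12(x-\bar x)^{\rm T}B^{-1}(x-\bar x)$ (i.e. $U\equiv0$). For step size $\Delta\tau>0$ consider the scheme $$p_{n+1/2} = p_n - \tfrac{\Delta\tau}{2}\nabla_xV(x_n),\quad x_{n+1} = x_n + \Delta\tau\,\widetilde M^{-1}p_{n+1/2},\quad p_{n+1} = p_{n+1/2}-\tfrac{\Delta\tau}{2}\nabla_xV(x_{n+1}),$$ with $\widetilde M = I + \frac{\Delta\tau^2}{4}B^{-1}$. Then for all $\Delta\tau>0$ and all $(x_n,p_n)$, $$\mathcal{H}(x_{n+1},p_{n+1}) = \mathcal{H}(x_n,p_n),\qquad \mathcal{H}(x,p) := \tfrac12p^{\rm T}p + V(x).$$ *)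

theory Defs
  imports "HOL-Analysis.Analysis"
begin

definition sym_pos_def_matrix :: "real^'n^'n \<Rightarrow> bool" where
  "sym_pos_def_matrix B \<longleftrightarrow> transpose B = B \<and> (\<forall>x. x \<noteq> 0 \<longrightarrow> x \<bullet> (B *v x) > 0)"

definition quadV :: "real^'n^'n \<Rightarrow> real^'n \<Rightarrow> real^'n \<Rightarrow> real" where
  "quadV B xbar x = (1/2) * ((x - xbar) \<bullet> (matrix_inv B *v (x - xbar)))"

definition hamiltonian :: "(real^'n \<Rightarrow> real) \<Rightarrow> real^'n \<Rightarrow> real^'n \<Rightarrow> real" where
  "hamiltonian V x p = (1/2) * (p \<bullet> p) + V x"

end

theory Submission
  imports Defs
begin

text \<open>Write \<open>y = x - xbar\<close> and \<open>A = B\<inverse>\<close>, so that the force is \<open>-A y\<close>. Multiplying the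
  position update by \<open>I + dt\<^sup>2/4 A\<close> turns it into \<open>dt q = (y' - y) + dt\<^sup>2/4 A (y' - y)\<close>,
  with \<open>q\<close> the half-step momentum. Pairing this with \<open>A y' + A y\<close>, symmetry of \<open>A\<close> cancels the
  cross terms, leaving \<open>dt q \<bullet> (A y' + A y)\<close> equal to the gain in (doubled) potential energy plus
  \<open>dt\<^sup>2/4\<close> times the change of \<open>|A y|\<^sup>2\<close>. Expanding the kinetic terms \<open>|q - dt/2 A y'|\<^sup>2\<close> and
  \<open>|q + dt/2 A y|\<^sup>2\<close> produces the same expression with the loss of kinetic energy in its place.\<close>

lemma matrix_inv_right:
  fixes A :: "'a::field^'n^'n"
  assumes "invertible A"
  shows "A ** matrix_inv A = mat 1"
proof -
  have "\<exists>A'. A ** A' = mat 1 \<and> A' ** A = mat 1"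
    using assms by (simp add: invertible_def)
  from someI_ex[OF this] show ?thesis
    unfolding matrix_inv_def by blast
qed

lemma matrix_inv_symmetric:
  fixes A :: "'a::field^'n^'n"
  assumes "transpose A = A" and "invertible A"
  shows "transpose (matrix_inv A) = matrix_inv A"
proof -
  have "transpose (matrix_inv A) ** A = mat 1"
    by (metis assms matrix_inv_right matrix_transpose_mul transpose_mat)
  then have "transpose (matrix_inv A) ** (A ** matrix_inv A) = matrix_inv A"
    by (metis matrix_mul_assoc matrix_mul_lid)
  then show ?thesis
    by (simp add: matrix_inv_right[OF assms(2)] matrix_mul_rid)
qed

lemma invertible_if_inner_pos:
  fixes A :: "real^'n^'n"
  assumes "\<And>x. x \<noteq> 0 \<Longrightarrow> x \<bullet> (A *v x) > 0"
  shows "invertible A"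
proof -
  have "\<forall>x. A *v x = 0 \<longrightarrow> x = 0"
    using assms by (metis inner_zero_right less_irrefl)
  then show ?thesis
    unfolding invertible_left_inverse matrix_left_invertible_ker .
qed

lemma sym_pos_def_matrix_invertible:
  "sym_pos_def_matrix B \<Longrightarrow> invertible B"
  unfolding sym_pos_def_matrix_def by (blast intro: invertible_if_inner_pos)

lemma sym_pos_def_matrix_inv_symmetric:
  "sym_pos_def_matrix B \<Longrightarrow> transpose (matrix_inv B) = matrix_inv B"
  by (simp add: matrix_inv_symmetric sym_pos_def_matrix_invertible sym_pos_def_matrix_def)

lemma sym_pos_def_matrix_inv_nonneg:
  assumes "sym_pos_def_matrix B"
  shows "x \<bullet> (matrix_inv B *v x) \<ge> 0"
proof -
  let ?y = "matrix_inv B *v x"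
  have "x = B *v ?y"
    by (simp add: matrix_vector_mul_assoc matrix_inv_right sym_pos_def_matrix_invertible[OF assms])
  then have "x \<bullet> ?y = ?y \<bullet> (B *v ?y)"
    by (metis inner_commute)
  also have "\<dots> \<ge> 0"
    using assms unfolding sym_pos_def_matrix_def by (cases "?y = 0") (auto intro: less_imp_le)
  finally show ?thesis .
qed

lemma invertible_mat_1_plus_nonneg:
  fixes A :: "real^'n^'n"
  assumes "\<And>x. x \<bullet> (A *v x) \<ge> 0" and "c \<ge> 0"
  shows "invertible (mat 1 + c *\<^sub>R A)"
proof (rule invertible_if_inner_pos)
  fix x :: "real^'n"
  assume "x \<noteq> 0"
  have "x \<bullet> ((mat 1 + c *\<^sub>R A) *v x) = x \<bullet> x + c * (x \<bullet> (A *v x))"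
    by (simp add: matrix_vector_mult_add_rdistrib inner_add_right flip: scaleR_matrix_vector_assoc)
  moreover have "c * (x \<bullet> (A *v x)) \<ge> 0"
    using assms by simp
  ultimately show "x \<bullet> ((mat 1 + c *\<^sub>R A) *v x) > 0"
    using \<open>x \<noteq> 0\<close> by (smt (verit) inner_gt_zero_iff)
qed

lemma has_derivative_quadratic_form:
  fixes A :: "real^'n^'n"
  assumes "transpose A = A"
  shows "((\<lambda>x. (1/2) * ((x - a) \<bullet> (A *v (x - a)))) has_derivative
           (\<lambda>h. (A *v (x - a)) \<bullet> h)) (at x)"
proof -
  have lin: "((\<lambda>x. A *v (x - a)) has_derivative (*v) A) (at x)"
    by (auto simp: matrix_vector_mult_diff_distrib
        intro!: derivative_eq_intros bounded_linear_imp_has_derivative matrix_vector_mul_bounded_linear)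
  have "((\<lambda>x. (1/2) * ((x - a) \<bullet> (A *v (x - a)))) has_derivative
      (\<lambda>h. (1/2) * (h \<bullet> (A *v (x - a)) + (x - a) \<bullet> (A *v h)))) (at x)"
    by (auto intro!: derivative_eq_intros lin)
  moreover have "(x - a) \<bullet> (A *v h) = (A *v (x - a)) \<bullet> h" for h
    by (metis assms dot_lmul_matrix transpose_matrix_vector)
  ultimately show ?thesis
    by (simp add: inner_commute[of _ "A *v (x - a)"])
qed

lemma quadV_gradient:
  assumes "sym_pos_def_matrix B"
    and "(quadV B xbar has_derivative (\<lambda>h. g \<bullet> h)) (at x)"
  shows "g = matrix_inv B *v (x - xbar)"
proof -
  have "(quadV B xbar has_derivative (\<lambda>h. (matrix_inv B *v (x - xbar)) \<bullet> h)) (at x)"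
    unfolding quadV_def
    by (rule has_derivative_quadratic_form[OF sym_pos_def_matrix_inv_symmetric[OF assms(1)]])
  then have "(\<lambda>h. g \<bullet> h) = (\<lambda>h. (matrix_inv B *v (x - xbar)) \<bullet> h)"
    using assms(2) has_derivative_unique by blast
  then show ?thesis
    by (metis vector_eq_rdot)
qed

lemma leapfrog_energy_identity:
  fixes f :: "'a::real_inner \<Rightarrow> 'a"
  assumes "linear f" and self_adjoint: "\<And>u v. u \<bullet> f v = f u \<bullet> v"
    and step: "dt *\<^sub>R q = (y' - y) + (dt\<^sup>2 / 4) *\<^sub>R f (y' - y)"
  shows "(q - (dt / 2) *\<^sub>R f y') \<bullet> (q - (dt / 2) *\<^sub>R f y') + y' \<bullet> f y'
       = (q + (dt / 2) *\<^sub>R f y) \<bullet> (q + (dt / 2) *\<^sub>R f y) + y \<bullet> f y"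
proof -
  define g g' where "g = f y" and "g' = f y'"
  have "dt * (q \<bullet> g') + dt * (q \<bullet> g) = ((y' - y) + (dt\<^sup>2 / 4) *\<^sub>R (g' - g)) \<bullet> (g' + g)"
    using step \<open>linear f\<close>
    by (simp add: g_def g'_def linear_diff inner_add_right flip: inner_scaleR_left)
  also have "\<dots> = (y' \<bullet> g' - y \<bullet> g) + (y' \<bullet> g - y \<bullet> g')
      + (dt\<^sup>2 / 4) * (g' \<bullet> g') - (dt\<^sup>2 / 4) * (g \<bullet> g)"
    by (simp add: inner_add_left inner_add_right inner_diff_left inner_diff_right
        inner_commute[of g g'] right_diff_distrib)
  also have "y' \<bullet> g - y \<bullet> g' = 0"
    using self_adjoint[of y' y] by (simp add: g_def g'_def inner_commute[of "f y'" y])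
  finally have key: "dt * (q \<bullet> g') + dt * (q \<bullet> g)
      = y' \<bullet> g' - y \<bullet> g + (dt\<^sup>2 / 4) * (g' \<bullet> g') - (dt\<^sup>2 / 4) * (g \<bullet> g)"
    by simp
  have "(q - (dt / 2) *\<^sub>R g') \<bullet> (q - (dt / 2) *\<^sub>R g')
      = q \<bullet> q - dt * (q \<bullet> g') + (dt\<^sup>2 / 4) * (g' \<bullet> g')"
    by (simp add: inner_diff_left inner_diff_right inner_commute[of g' q] power2_eq_square algebra_simps)
  moreover have "(q + (dt / 2) *\<^sub>R g) \<bullet> (q + (dt / 2) *\<^sub>R g)
      = q \<bullet> q + dt * (q \<bullet> g) + (dt\<^sup>2 / 4) * (g \<bullet> g)"
    by (simp add: inner_add_left inner_add_right inner_commute[of g q] power2_eq_square algebra_simps)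
  ultimately show ?thesis
    using key unfolding g_def [symmetric] g'_def [symmetric] by linarith
qed

theorem mainTheorem16:
  fixes B :: "real^'n^'n" and xbar xn pn :: "real^'n" and dt :: real
    and gradV :: "real^'n \<Rightarrow> real^'n"
  assumes "sym_pos_def_matrix B"
    and "\<And>x. (quadV B xbar has_derivative (\<lambda>h. gradV x \<bullet> h)) (at x)"
    and "dt > 0"
  shows "let Mt = mat 1 + (dt^2 / 4) *\<^sub>R matrix_inv B;
             phalf = pn - (dt / 2) *\<^sub>R gradV xn;
             xn1 = xn + dt *\<^sub>R (matrix_inv Mt *v phalf);
             pn1 = phalf - (dt / 2) *\<^sub>R gradV xn1
         in hamiltonian (quadV B xbar) xn1 pn1 = hamiltonian (quadV B xbar) xn pn"
proof -
  define A where "A = matrix_inv B"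
  define Mt where "Mt = mat 1 + (dt^2 / 4) *\<^sub>R A"
  define phalf where "phalf = pn - (dt / 2) *\<^sub>R gradV xn"
  define xn1 where "xn1 = xn + dt *\<^sub>R (matrix_inv Mt *v phalf)"
  have grad: "gradV x = A *v (x - xbar)" for x
    unfolding A_def using assms(1,2) by (rule quadV_gradient)
  have A_self_adjoint: "u \<bullet> (A *v v) = (A *v u) \<bullet> v" for u v
    unfolding A_def
    by (metis dot_lmul_matrix transpose_matrix_vector sym_pos_def_matrix_inv_symmetric[OF assms(1)])
  have "invertible Mt"
    unfolding Mt_def A_def
    by (simp add: invertible_mat_1_plus_nonneg sym_pos_def_matrix_inv_nonneg[OF assms(1)])
  then have "Mt *v (xn1 - xn) = dt *\<^sub>R phalf"
    by (simp add: xn1_def matrix_vector_mult_scaleR matrix_vector_mul_assoc matrix_inv_right)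
  then have step: "dt *\<^sub>R phalf
      = ((xn1 - xbar) - (xn - xbar)) + (dt^2 / 4) *\<^sub>R (A *v ((xn1 - xbar) - (xn - xbar)))"
    by (simp add: Mt_def matrix_vector_mult_add_rdistrib flip: scaleR_matrix_vector_assoc)
  have "pn = phalf + (dt / 2) *\<^sub>R (A *v (xn - xbar))"
    by (simp add: phalf_def grad)
  then have "hamiltonian (quadV B xbar) xn1 (phalf - (dt / 2) *\<^sub>R gradV xn1)
      = hamiltonian (quadV B xbar) xn pn"
    using leapfrog_energy_identity[OF matrix_vector_mul_linear A_self_adjoint step]
    unfolding hamiltonian_def quadV_def A_def[symmetric] grad
    by simp
  then show ?thesis
    unfolding Let_def xn1_def phalf_def Mt_def A_def .
qed

end
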